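(* For every task arrival process $\mathcal{T}$, the total measure of times at which the scheduler $\texttt{UNK}$ (described in the context) is saturated is at most $3\,\mathrm{T}_{\texttt{OPT}}$, where $\mathrm{T}_{\texttt{OPT}}$ is the awake time of the optimal offline schedule on $\mathcal{T}$.
   Context: Serial-parallel scheduling problem: $p$ identical processors; a task arrival process is a finite set of tasks $\tau_i=(\sigma_i,\pi_i,t_i)$ with arrival time $t_i\ge 0$, serial work $\sigma_i$, parallel work $\pi_i$, $1\le\pi_i/\sigma_i\le p$. A task runs either as a serial job (work $\sigma_i$, at most one processor at a time) or as a parallel job (work $\pi_i$, any number of processors, rate equal to number of processors); the choice is irrevocable once the task is started; time is continuous and preemption is allowed. A task is alive from arrival until completion; the awake time of a schedule is the measure of the set of times at which some task is alive; $\texttt{OPT}$ is an optimal offline schedule (minimizing awake time). The scheduler $\texttt{UNK}$: whenever there are idle processors, $\texttt{UNK}$ takes any arrived but not-yet-started task $\tau_i$ and, if $\tau_i$ arrived more than $\sigma_i$ time ago, starts its serial job; otherwise it starts its parallel job. At each time $\texttt{UNK}$ allocates one processor to each of the (at most $p$) running serial jobs; at most one parallel job runs at a time, and it receives all processors not used by serial jobs. $\texttt{UNK}$ is saturated at a time if all $p$ processors are in use. *)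

theory Defs
  imports "HOL-Analysis.Analysis"
begin

text \<open>Tasks are indexed by i < n.  Task i has arrival time a i, serial work sw i and
parallel work pw i.  There are p identical processors.\<close>

text \<open>A schedule fixes, for every task i, the irrevocable mode choice
(ser i = True: serial job, False: parallel job), the number of processors
r i s used by task i at time s, and its completion time C i.
Time is continuous and preemption is allowed.\<close>

definition valid_schedule ::
  "nat \<Rightarrow> nat \<Rightarrow> (nat \<Rightarrow> real) \<Rightarrow> (nat \<Rightarrow> real) \<Rightarrow> (nat \<Rightarrow> real)
   \<Rightarrow> (nat \<Rightarrow> bool) \<Rightarrow> (nat \<Rightarrow> real \<Rightarrow> nat) \<Rightarrow> (nat \<Rightarrow> real) \<Rightarrow> bool" where
  "valid_schedule p n sw pw a ser r C \<longleftrightarrow>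
     (\<forall>i<n. a i \<le> C i
        \<and> (\<forall>s. s < a i \<or> C i \<le> s \<longrightarrow> r i s = 0)
        \<and> (ser i \<longrightarrow> (\<forall>s. r i s \<le> 1))
        \<and> ((\<lambda>s. real (r i s)) has_integral (if ser i then sw i else pw i)) {a i..C i})
   \<and> (\<forall>s. (\<Sum>i<n. r i s) \<le> p)"

definition awake_time :: "nat \<Rightarrow> (nat \<Rightarrow> real) \<Rightarrow> (nat \<Rightarrow> real) \<Rightarrow> real" where
  "awake_time n a C = measure lborel (\<Union>i<n. {a i..<C i})"

definition opt_awake ::
  "nat \<Rightarrow> nat \<Rightarrow> (nat \<Rightarrow> real) \<Rightarrow> (nat \<Rightarrow> real) \<Rightarrow> (nat \<Rightarrow> real) \<Rightarrow> real" where
  "opt_awake p n sw pw a =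
     Inf {awake_time n a C | ser r C. valid_schedule p n sw pw a ser r C}"

text \<open>A run of UNK is described by the start times S i and completion times C i.
The mode of task i is serial iff it arrived more than sw i time before its start.\<close>

definition unk_serial :: "(nat \<Rightarrow> real) \<Rightarrow> (nat \<Rightarrow> real) \<Rightarrow> (nat \<Rightarrow> real) \<Rightarrow> nat \<Rightarrow> bool" where
  "unk_serial sw a S i \<longleftrightarrow> S i - a i > sw i"

definition unk_nser ::
  "nat \<Rightarrow> (nat \<Rightarrow> real) \<Rightarrow> (nat \<Rightarrow> real) \<Rightarrow> (nat \<Rightarrow> real) \<Rightarrow> (nat \<Rightarrow> real) \<Rightarrow> real \<Rightarrow> nat" where
  "unk_nser n sw a S C s = card {i. i < n \<and> unk_serial sw a S i \<and> S i \<le> s \<and> s < C i}"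

definition unk_par_running ::
  "nat \<Rightarrow> (nat \<Rightarrow> real) \<Rightarrow> (nat \<Rightarrow> real) \<Rightarrow> (nat \<Rightarrow> real) \<Rightarrow> (nat \<Rightarrow> real) \<Rightarrow> real \<Rightarrow> bool" where
  "unk_par_running n sw a S C s \<longleftrightarrow> (\<exists>j<n. \<not> unk_serial sw a S j \<and> S j \<le> s \<and> s < C j)"

definition unk_run ::
  "nat \<Rightarrow> nat \<Rightarrow> (nat \<Rightarrow> real) \<Rightarrow> (nat \<Rightarrow> real) \<Rightarrow> (nat \<Rightarrow> real)
   \<Rightarrow> (nat \<Rightarrow> real) \<Rightarrow> (nat \<Rightarrow> real) \<Rightarrow> bool" where
  "unk_run p n sw pw a S C \<longleftrightarrow>
     \<comment> \<open>tasks start after arrival\<close>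
     (\<forall>i<n. a i \<le> S i)
     \<comment> \<open>a serial job runs on one processor from its start until completion\<close>
   \<and> (\<forall>i<n. unk_serial sw a S i \<longrightarrow> C i = S i + sw i)
     \<comment> \<open>a parallel job receives all processors not used by serial jobs\<close>
   \<and> (\<forall>i<n. \<not> unk_serial sw a S i \<longrightarrow> S i \<le> C i \<and>
        ((\<lambda>s. real p - real (unk_nser n sw a S C s)) has_integral pw i) {S i..C i})
     \<comment> \<open>at most one parallel job at a time\<close>
   \<and> (\<forall>i<n. \<forall>j<n. i \<noteq> j \<and> \<not> unk_serial sw a S i \<and> \<not> unk_serial sw a S j
        \<longrightarrow> C i \<le> S j \<or> C j \<le> S i)
     \<comment> \<open>at most p serial jobs at a time\<close>
   \<and> (\<forall>s. unk_nser n sw a S C s \<le> p)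
     \<comment> \<open>tasks are only started when there are idle processors:
         no serial job starts while a parallel job runs,
         and a parallel job starts only if some processor is free of serial jobs\<close>
   \<and> (\<forall>i<n. \<forall>j<n. unk_serial sw a S i \<and> \<not> unk_serial sw a S j
        \<longrightarrow> \<not> (S j < S i \<and> S i < C j))
   \<and> (\<forall>j<n. \<not> unk_serial sw a S j \<longrightarrow> unk_nser n sw a S C (S j) < p)
     \<comment> \<open>whenever there are idle processors, no arrived task is left unstarted\<close>
   \<and> (\<forall>s. (\<exists>i<n. a i \<le> s \<and> s < S i) \<longrightarrow>
        unk_par_running n sw a S C s \<or> unk_nser n sw a S C s = p)"

definition unk_saturated ::
  "nat \<Rightarrow> nat \<Rightarrow> (nat \<Rightarrow> real) \<Rightarrow> (nat \<Rightarrow> real) \<Rightarrow> (nat \<Rightarrow> real) \<Rightarrow> (nat \<Rightarrow> real) \<Rightarrow> real set" where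
  "unk_saturated p n sw a S C =
     {s. unk_par_running n sw a S C s \<or> unk_nser n sw a S C s = p}"

end

theory Submission
  imports Defs
begin

text \<open>While UNK is saturated it does work at rate p, so p times its saturated time is at
  most its total work.  A task costs UNK no more than it costs any schedule, unless UNK runs
  it as a parallel job and the schedule as a serial one.  Such a task j is started by UNK
  within sw j of its arrival and its parallel job lasts at least pw j / p \<le> sw j, while the
  schedule is awake throughout [a j, a j + sw j); hence these pairwise disjoint parallel jobs
  last at most twice the awake time of the schedule.  The schedule's own work is at most p
  times its awake time, which gives the factor 3.\<close>

lemma fmeasurable_lborel_bounded:
  fixes A :: "'a::euclidean_space set"
  assumes "A \<in> sets borel" "bounded A"
  shows "A \<in> fmeasurable lborel"
  using assms by (intro fmeasurableI emeasure_bounded_finite) simp_all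

lemma has_integral_indicator_lborel:
  fixes A :: "'a::euclidean_space set"
  assumes "A \<in> sets borel" "bounded A"
  shows "(indicat_real A has_integral measure lborel A) UNIV"
proof -
  have "((\<lambda>x. 1) has_integral measure lborel A) A"
    using assms by (intro has_integral_measure_lborel emeasure_bounded_finite)
  then have "((\<lambda>x. if x \<in> A then 1 else 0) has_integral measure lborel A) UNIV"
    by (rule has_integral_restrict_UNIV[THEN iffD2])
  moreover have "indicat_real A = (\<lambda>x. if x \<in> A then 1 else 0)"
    by (auto simp: indicator_def)
  ultimately show ?thesis by simp
qed

lemma sum_measure_disjoint_le:
  assumes "finite D" "A ` D \<subseteq> sets M" "disjoint_family_on A D"
    and "(\<Union>j\<in>D. A j) \<subseteq> U" "U \<in> fmeasurable M"
  shows "(\<Sum>j\<in>D. measure M (A j)) \<le> measure M U"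
proof -
  have fin: "A j \<in> fmeasurable M" if "j \<in> D" for j
  proof (rule fmeasurableI2[OF assms(5)])
    show "A j \<subseteq> U" using assms(4) that by blast
    show "A j \<in> sets M" using assms(2) that by blast
  qed
  then have "(\<Sum>j\<in>D. measure M (A j)) = measure M (\<Union>j\<in>D. A j)"
    using assms fmeasurableD2[OF fin] by (intro measure_finite_Union[symmetric]) auto
  also have "\<dots> \<le> measure M U"
    using assms by (intro measure_mono_fmeasurable) auto
  finally show ?thesis .
qed

lemma measure_interval_outside_le_delay:
  fixes a w S m :: real
  assumes U: "U \<in> sets borel" and window: "{a..<a + w} \<subseteq> U"
    and "m \<le> w" "a \<le> S"
  shows "measure lborel ({S..<S + m} - U) \<le> S - a"
proof -
  have "{S..<S + m} - U \<subseteq> {a + m..<S + m}"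
  proof
    fix x assume x: "x \<in> {S..<S + m} - U"
    then have "x \<notin> {a..<a + w}" using window by blast
    then show "x \<in> {a + m..<S + m}" using x assms(3,4) by auto
  qed
  then have "measure lborel ({S..<S + m} - U) \<le> measure lborel {a + m..<S + m}"
    using U by (intro measure_mono_fmeasurable fmeasurable_lborel_bounded) auto
  then show ?thesis using \<open>a \<le> S\<close> by simp
qed

lemma overhanging_interval_precedes_window:
  fixes S m a' w' S' :: real
  assumes "\<not> {S..<S + m} \<subseteq> U" "{a'..<a' + w'} \<subseteq> U" "S + m \<le> S'" "S' \<le> a' + w'"
  shows "S < a'"
proof -
  obtain t where t: "t \<in> {S..<S + m}" "t \<notin> U" using assms(1) by blast
  then have "t \<notin> {a'..<a' + w'}" using assms(2) by blast
  then show ?thesis using t assms(3,4) by auto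
qed

text \<open>Each interval [S j, S j + m j) sticks out of U by at most S j - a j, because the
  window [a j, a j + w j) lies in U and is at least as long as the interval.  The delays
  [a j, S j) of the intervals that do stick out are pairwise disjoint subsets of U.\<close>

lemma sum_lengths_le_twice_measure_of_windows:
  fixes a w S m :: "'i \<Rightarrow> real"
  assumes D: "finite D" and U: "U \<in> sets borel" "bounded U"
    and window: "\<And>j. j \<in> D \<Longrightarrow> {a j..<a j + w j} \<subseteq> U"
    and len: "\<And>j. j \<in> D \<Longrightarrow> 0 \<le> m j \<and> m j \<le> w j"
    and start: "\<And>j. j \<in> D \<Longrightarrow> a j \<le> S j \<and> S j \<le> a j + w j"
    and disj: "\<And>i j. i \<in> D \<Longrightarrow> j \<in> D \<Longrightarrow> i \<noteq> j \<Longrightarrow>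
      S i + m i \<le> S j \<or> S j + m j \<le> S i"
  shows "(\<Sum>j\<in>D. m j) \<le> 2 * measure lborel U"
proof -
  define J where "J j = {S j..<S j + m j}" for j
  define delay where "delay j = (if J j \<subseteq> U then {} else {a j..<S j})" for j
  have UM: "U \<in> fmeasurable lborel"
    using U by (rule fmeasurable_lborel_bounded)
  have overhang: "m j \<le> measure lborel (J j \<inter> U) + measure lborel (delay j)" if j: "j \<in> D" for j
  proof -
    have "measure lborel (J j - U) \<le> measure lborel (delay j)"
    proof (cases "J j \<subseteq> U")
      case True
      then have "J j - U = {}" "delay j = {}" by (auto simp: delay_def)
      then show ?thesis by (metis order_refl)
    qed (use measure_interval_outside_le_delay[OF U(1) window[OF j]] len[OF j] start[OF j]
          in \<open>simp add: J_def delay_def\<close>)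
    moreover have "measure lborel (J j) \<le> measure lborel (J j \<inter> U) + measure lborel (J j - U)"
      using U measure_Un_le[of "J j \<inter> U" lborel "J j - U"] by (simp add: Int_Diff_Un J_def)
    ultimately show ?thesis
      using len[OF j] by (simp add: J_def)
  qed
  have "(\<Sum>j\<in>D. measure lborel (J j \<inter> U)) \<le> measure lborel U"
  proof (rule sum_measure_disjoint_le[OF D _ _ _ UM])
    show "disjoint_family_on (\<lambda>j. J j \<inter> U) D"
      unfolding disjoint_family_on_def
    proof (intro ballI impI)
      fix i j assume "i \<in> D" "j \<in> D" "i \<noteq> j"
      then have "S i + m i \<le> S j \<or> S j + m j \<le> S i" by (rule disj)
      then show "J i \<inter> U \<inter> (J j \<inter> U) = {}" by (auto simp: J_def)
    qed
  qed (use U in \<open>auto simp: J_def\<close>)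
  moreover have "(\<Sum>j\<in>D. measure lborel (delay j)) \<le> measure lborel U"
  proof (rule sum_measure_disjoint_le[OF D _ _ _ UM])
    have "delay i \<inter> delay j = {}" if ij: "i \<in> D" "j \<in> D" "S i + m i \<le> S j" for i j
    proof (cases "J i \<subseteq> U")
      case False
      then have "S i < a j"
        using overhanging_interval_precedes_window[OF _ window[OF ij(2)] ij(3)] start[OF ij(2)]
        by (simp add: J_def)
      then show ?thesis by (auto simp: delay_def)
    qed (simp add: delay_def)
    then show "disjoint_family_on delay D"
      unfolding disjoint_family_on_def by (metis disj inf_commute)
    have "delay j \<subseteq> {a j..<a j + w j}" if "j \<in> D" for j
      using start[OF that] by (auto simp: delay_def)
    then show "(\<Union>j\<in>D. delay j) \<subseteq> U"
      using window by blast
  qed (auto simp: delay_def)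
  ultimately show ?thesis
    using sum_mono[of D m "\<lambda>j. measure lborel (J j \<inter> U) + measure lborel (delay j)"] overhang
    by (simp add: sum.distrib)
qed

lemma valid_schedule_work_le_awake_time:
  assumes V: "valid_schedule p n sw pw a ser r C"
  shows "(\<Sum>i<n. if ser i then sw i else pw i) \<le> real p * awake_time n a C"
proof -
  let ?U = "\<Union>i<n. {a i..<C i}"
  have "((\<lambda>s. real (r i s)) has_integral (if ser i then sw i else pw i)) UNIV" if i: "i < n" for i
  proof -
    have "((\<lambda>s. real (r i s)) has_integral (if ser i then sw i else pw i)) {a i..C i}"
      and "\<forall>s. s < a i \<or> C i \<le> s \<longrightarrow> r i s = 0"
      using V i unfolding valid_schedule_def by auto
    then show ?thesis
      by (intro has_integral_eq[OF _ has_integral_restrict_UNIV[THEN iffD2]]) (auto simp: not_le)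
  qed
  then have "((\<lambda>s. \<Sum>i<n. real (r i s)) has_integral (\<Sum>i<n. if ser i then sw i else pw i)) UNIV"
    by (intro has_integral_sum) auto
  moreover have "((\<lambda>s. real p * indicator ?U s) has_integral real p * measure lborel ?U) UNIV"
    by (intro has_integral_mult_right has_integral_indicator_lborel) auto
  moreover have "(\<Sum>i<n. real (r i s)) \<le> real p * indicator ?U s" for s
  proof (cases "s \<in> ?U")
    case True
    have "(\<Sum>i<n. r i s) \<le> p" using V unfolding valid_schedule_def by auto
    then show ?thesis using True by (simp flip: of_nat_sum)
  next
    case False
    have "r i s = 0" if "i < n" for i
    proof -
      have "s \<notin> {a i..<C i}" using False that by blast
      then have "s < a i \<or> C i \<le> s" by auto
      then show ?thesis using V that unfolding valid_schedule_def by blast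
    qed
    then show ?thesis using False by simp
  qed
  ultimately show ?thesis
    unfolding awake_time_def by (rule has_integral_le)
qed

lemma valid_schedule_serial_window:
  assumes V: "valid_schedule p n sw pw a ser r C" and i: "i < n" "ser i"
  shows "{a i..<a i + sw i} \<subseteq> (\<Union>i<n. {a i..<C i})"
proof -
  have h: "((\<lambda>s. real (r i s)) has_integral sw i) {a i..C i}"
    and "\<forall>s. r i s \<le> 1" "a i \<le> C i"
    using V i unfolding valid_schedule_def by auto
  moreover have "((\<lambda>s. 1) has_integral C i - a i) {a i..C i}"
    using has_integral_const_real[of "1::real" "a i" "C i"] \<open>a i \<le> C i\<close> by simp
  ultimately have "sw i \<le> C i - a i"
    using has_integral_le[OF h] by auto
  then show ?thesis using i by auto
qed

lemma card_consecutive_intervals_le_1: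
  fixes T C :: "nat \<Rightarrow> real"
  assumes "\<And>i k. i < k \<Longrightarrow> k < n \<Longrightarrow> C i \<le> T k"
  shows "card {i. i < n \<and> T i \<le> s \<and> s < C i} \<le> 1"
proof -
  have unique: "i = k" if "i < n" "k < n" "T i \<le> s" "s < C i" "T k \<le> s" "s < C k" for i k
    using assms[of i k] assms[of k i] that by (cases i k rule: linorder_cases) auto
  have "card {i. i < n \<and> T i \<le> s \<and> s < C i} \<le> Suc 0"
    by (subst card_le_Suc0_iff_eq) (use unique in auto)
  then show ?thesis by simp
qed

text \<open>Run all tasks as serial jobs, one after another, after every task has arrived.\<close>

lemma valid_schedule_exists:
  assumes p: "p \<ge> 1" and sw: "\<And>i. i < n \<Longrightarrow> 0 \<le> sw i"
  shows "\<exists>ser r C. valid_schedule p n sw pw a ser r C"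
proof -
  define T where "T i = (\<Sum>k<n. \<bar>a k\<bar>) + (\<Sum>k<i. sw k)" for i
  define C where "C i = T i + sw i" for i
  define r :: "nat \<Rightarrow> real \<Rightarrow> nat" where "r i s = of_bool (T i \<le> s \<and> s < C i)" for i s
  have arrived: "a i \<le> T i" if "i < n" for i
  proof -
    have "\<bar>a i\<bar> \<le> (\<Sum>k<n. \<bar>a k\<bar>)"
      using that by (intro member_le_sum) auto
    then have "a i \<le> (\<Sum>k<n. \<bar>a k\<bar>)" by linarith
    moreover have "0 \<le> (\<Sum>k<i. sw k)"
      using sw that by (intro sum_nonneg) auto
    ultimately show ?thesis by (simp add: T_def)
  qed
  have consecutive: "C i \<le> T k" if "i < k" "k < n" for i k
  proof -
    have "(\<Sum>j<Suc i. sw j) \<le> (\<Sum>j<k. sw j)"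
      using sw that by (intro sum_mono2) auto
    then show ?thesis by (simp add: C_def T_def)
  qed
  have "valid_schedule p n sw pw a (\<lambda>_. True) r C"
    unfolding valid_schedule_def
  proof (intro conjI allI impI)
    fix i assume i: "i < n"
    show "a i \<le> C i" using arrived[OF i] sw[OF i] by (simp add: C_def)
    show "\<And>s. s < a i \<or> C i \<le> s \<Longrightarrow> r i s = 0" using arrived[OF i] by (auto simp: r_def)
    show "\<And>s. r i s \<le> 1" by (simp add: r_def)
    have "(indicat_real {T i..<C i} has_integral sw i) UNIV"
      using has_integral_indicator_lborel[of "{T i..<C i}"] sw[OF i] by (simp add: C_def)
    then have "((\<lambda>s. if s \<in> {a i..C i} then real (r i s) else 0) has_integral sw i) UNIV"
      by (rule has_integral_eq[rotated]) (use arrived[OF i] in \<open>auto simp: r_def\<close>)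
    then have "((\<lambda>s. real (r i s)) has_integral sw i) {a i..C i}"
      by (rule has_integral_restrict_UNIV[THEN iffD1])
    then show "((\<lambda>s. real (r i s)) has_integral (if True then sw i else pw i)) {a i..C i}"
      by simp
  next
    fix s
    have "(\<Sum>i<n. r i s) = card {i. i < n \<and> T i \<le> s \<and> s < C i}"
      by (simp add: r_def Int_def conj_commute)
    then show "(\<Sum>i<n. r i s) \<le> p"
      using card_consecutive_intervals_le_1[where T = T and C = C and n = n and s = s, OF consecutive] p
      by simp
  qed
  then show ?thesis by blast
qed

text \<open>The closed interval [S i, C i] matches the integration domain of the parallel work
  in unk_run.\<close>

definition unk_load ::
  "nat \<Rightarrow> nat \<Rightarrow> (nat \<Rightarrow> real) \<Rightarrow> (nat \<Rightarrow> real) \<Rightarrow> (nat \<Rightarrow> real) \<Rightarrow> (nat \<Rightarrow> real)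
   \<Rightarrow> nat \<Rightarrow> real \<Rightarrow> real" where
  "unk_load p n sw a S C i s =
     (if s \<in> {S i..C i}
      then (if unk_serial sw a S i then 1 else real p - real (unk_nser n sw a S C s))
      else 0)"

lemma unk_load_nonneg:
  assumes "unk_run p n sw pw a S C"
  shows "0 \<le> unk_load p n sw a S C i s"
  using assms by (simp add: unk_load_def unk_run_def)

lemma has_integral_unk_load:
  assumes R: "unk_run p n sw pw a S C" and i: "i < n" "0 \<le> sw i"
  shows "(unk_load p n sw a S C i has_integral
           (if unk_serial sw a S i then sw i else pw i)) UNIV"
proof (cases "unk_serial sw a S i")
  case True
  then have "C i = S i + sw i" using R i by (simp add: unk_run_def)
  then have "((\<lambda>s. 1) has_integral sw i) {S i..C i}"
    using has_integral_const_real[of "1::real" "S i" "C i"] i by simp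
  then show ?thesis
    using True unfolding unk_load_def has_integral_restrict_UNIV by simp
next
  case False
  then have "((\<lambda>s. real p - real (unk_nser n sw a S C s)) has_integral pw i) {S i..C i}"
    using R i by (simp add: unk_run_def)
  then show ?thesis
    using False unfolding unk_load_def has_integral_restrict_UNIV by simp
qed

text \<open>At a saturated time either a parallel job takes all processors left over by the
  serial jobs, or the serial jobs alone occupy all p processors.\<close>

lemma saturated_le_sum_unk_load:
  assumes R: "unk_run p n sw pw a S C"
  shows "real p * indicator (unk_saturated p n sw a S C) s \<le> (\<Sum>i<n. unk_load p n sw a S C i s)"
proof (cases "s \<in> unk_saturated p n sw a S C")
  case False
  then show ?thesis by (simp add: sum_nonneg unk_load_nonneg[OF R])
next
  case True
  let ?load = "\<lambda>i. unk_load p n sw a S C i s" and ?N = "unk_nser n sw a S C s"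
  define A where "A = {i. i < n \<and> unk_serial sw a S i \<and> S i \<le> s \<and> s < C i}"
  have "?load i = 1" if "i \<in> A" for i
    using that by (simp add: A_def unk_load_def)
  then have serial_load: "(\<Sum>i\<in>A. ?load i) = real ?N"
    by (simp add: A_def unk_nser_def)
  have le_total: "(\<Sum>i\<in>B. ?load i) \<le> (\<Sum>i<n. ?load i)" if "B \<subseteq> {..<n}" for B
    using that by (intro sum_mono2) (auto simp: unk_load_nonneg[OF R])
  from True consider (parallel) j where "j < n" "\<not> unk_serial sw a S j" "S j \<le> s" "s < C j"
    | (serial) "?N = p"
    unfolding unk_saturated_def unk_par_running_def by blast
  then show ?thesis
  proof cases
    case parallel
    then have "(\<Sum>i\<in>insert j A. ?load i) = real p"
      using serial_load by (simp add: A_def unk_load_def)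
    moreover have "insert j A \<subseteq> {..<n}"
      using parallel by (auto simp: A_def)
    ultimately show ?thesis
      using True le_total[of "insert j A"] by simp
  next
    case serial
    moreover have "A \<subseteq> {..<n}" by (auto simp: A_def)
    ultimately show ?thesis
      using True le_total[of A] serial_load by simp
  qed
qed

lemma bounded_unk_saturated:
  assumes "p \<ge> 1"
  shows "bounded (unk_saturated p n sw a S C)"
proof (rule bounded_subset)
  show "bounded (\<Union>i<n. {S i..C i})" by auto
  show "unk_saturated p n sw a S C \<subseteq> (\<Union>i<n. {S i..C i})"
  proof
    fix s assume s: "s \<in> unk_saturated p n sw a S C"
    have "\<exists>i<n. S i \<le> s \<and> s < C i"
    proof (cases "unk_par_running n sw a S C s")
      case False
      then have "unk_nser n sw a S C s \<noteq> 0"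
        using s assms by (simp add: unk_saturated_def)
      then show ?thesis
        unfolding unk_nser_def by (metis (no_types, lifting) Collect_empty_eq card.empty)
    qed (auto simp: unk_par_running_def)
    then show "s \<in> (\<Union>i<n. {S i..C i})" by auto
  qed
qed

lemma unk_saturated_measure_le_work:
  assumes p: "p \<ge> 1" and sw: "\<forall>i<n. 0 \<le> sw i" and R: "unk_run p n sw pw a S C"
    and borel: "unk_saturated p n sw a S C \<in> sets borel"
  shows "real p * measure lborel (unk_saturated p n sw a S C)
           \<le> (\<Sum>i<n. if unk_serial sw a S i then sw i else pw i)"
proof (rule has_integral_le)
  show "((\<lambda>s. real p * indicator (unk_saturated p n sw a S C) s) has_integral
          real p * measure lborel (unk_saturated p n sw a S C)) UNIV"
    using borel bounded_unk_saturated[OF p]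
    by (intro has_integral_mult_right has_integral_indicator_lborel)
  show "((\<lambda>s. \<Sum>i<n. unk_load p n sw a S C i s) has_integral
          (\<Sum>i<n. if unk_serial sw a S i then sw i else pw i)) UNIV"
    using sw by (intro has_integral_sum has_integral_unk_load[OF R]) auto
qed (rule saturated_le_sum_unk_load[OF R])

lemma unk_parallel_work_le:
  assumes R: "unk_run p n sw pw a S C" and i: "i < n" "\<not> unk_serial sw a S i"
  shows "pw i \<le> real p * (C i - S i)"
proof -
  have work: "((\<lambda>s. real p - real (unk_nser n sw a S C s)) has_integral pw i) {S i..C i}"
    and "S i \<le> C i"
    using R i by (auto simp: unk_run_def)
  then have "((\<lambda>s. real p) has_integral real p * (C i - S i)) {S i..C i}"
    using has_integral_const_real[of "real p" "S i" "C i"] by (simp add: mult.commute)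
  with work show ?thesis
    by (rule has_integral_le) simp
qed

lemma unk_parallel_schedule_serial_work_le:
  assumes p: "p \<ge> 1"
    and H: "\<forall>i<n. 0 \<le> pw i \<and> pw i \<le> real p * sw i"
    and R: "unk_run p n sw pw a S C"
    and V: "valid_schedule p n sw pw a ser r C'"
  shows "(\<Sum>j\<in>{j\<in>{..<n}. \<not> unk_serial sw a S j \<and> ser j}. pw j)
           \<le> 2 * real p * awake_time n a C'"
proof -
  let ?D = "{j\<in>{..<n}. \<not> unk_serial sw a S j \<and> ser j}"
  have p_pos: "real p > 0" using p by simp
  have duration: "S j + pw j / real p \<le> C j" if "j \<in> ?D" for j
  proof -
    have "pw j / real p \<le> C j - S j"
      using unk_parallel_work_le[OF R, of j] that by (simp add: pos_divide_le_eq[OF p_pos] mult.commute)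
    then show ?thesis by simp
  qed
  have "(\<Sum>j\<in>?D. pw j / real p) \<le> 2 * measure lborel (\<Union>i<n. {a i..<C' i})"
  proof (rule sum_lengths_le_twice_measure_of_windows[where w = sw and a = a and S = S])
    fix j assume j: "j \<in> ?D"
    show "{a j..<a j + sw j} \<subseteq> (\<Union>i<n. {a i..<C' i})"
      using j by (intro valid_schedule_serial_window[OF V]) auto
    show "0 \<le> pw j / real p \<and> pw j / real p \<le> sw j"
      using j H p_pos by (auto simp: field_simps)
    show "a j \<le> S j \<and> S j \<le> a j + sw j"
      using j R by (auto simp: unk_run_def unk_serial_def)
  next
    fix i j assume "i \<in> ?D" "j \<in> ?D" "i \<noteq> j"
    then have "C i \<le> S j \<or> C j \<le> S i"
      using R by (simp add: unk_run_def)
    then show "S i + pw i / real p \<le> S j \<or> S j + pw j / real p \<le> S i"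
      using duration[of i] duration[of j] \<open>i \<in> ?D\<close> \<open>j \<in> ?D\<close> by auto
  qed auto
  then show ?thesis
    using p_pos by (simp add: awake_time_def sum_divide_distrib[symmetric] field_simps)
qed

lemma unk_saturated_le_awake_time:
  assumes p: "p \<ge> 1"
    and H: "\<forall>i<n. 0 \<le> sw i \<and> sw i \<le> pw i \<and> pw i \<le> real p * sw i"
    and R: "unk_run p n sw pw a S C"
    and V: "valid_schedule p n sw pw a ser r C'"
  shows "measure lborel (unk_saturated p n sw a S C) \<le> 3 * awake_time n a C'"
proof (cases "unk_saturated p n sw a S C \<in> sets borel")
  case False
  then show ?thesis by (simp add: measure_notin_sets awake_time_def)
next
  case True
  let ?D = "{j\<in>{..<n}. \<not> unk_serial sw a S j \<and> ser j}"
  have "real p * measure lborel (unk_saturated p n sw a S C)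
          \<le> (\<Sum>i<n. if unk_serial sw a S i then sw i else pw i)"
    using H by (intro unk_saturated_measure_le_work[OF p _ R True]) auto
  also have "\<dots> \<le> (\<Sum>i<n. (if ser i then sw i else pw i) + (if i \<in> ?D then pw i else 0))"
    using H by (intro sum_mono) auto
  also have "\<dots> = (\<Sum>i<n. if ser i then sw i else pw i) + (\<Sum>j\<in>?D. pw j)"
    by (simp add: sum.distrib sum.inter_filter[symmetric])
  also have "\<dots> \<le> real p * awake_time n a C' + 2 * real p * awake_time n a C'"
  proof (rule add_mono)
    show "(\<Sum>j\<in>?D. pw j) \<le> 2 * real p * awake_time n a C'"
      using H by (intro unk_parallel_schedule_serial_work_le[OF p _ R V]) force
  qed (rule valid_schedule_work_le_awake_time[OF V])
  finally show ?thesis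
    using p by (simp add: algebra_simps)
qed

theorem lemma5p3:
  fixes p n :: nat and sw pw a S C :: "nat \<Rightarrow> real"
  assumes "p \<ge> 1"
    and "\<forall>i<n. 0 \<le> a i \<and> 0 < sw i \<and> sw i \<le> pw i \<and> pw i \<le> real p * sw i"
    and "unk_run p n sw pw a S C"
  shows "measure lborel (unk_saturated p n sw a S C) \<le> 3 * opt_awake p n sw pw a"
proof -
  let ?awake = "{awake_time n a C' | ser r C'. valid_schedule p n sw pw a ser r C'}"
  have H: "\<forall>i<n. 0 \<le> sw i \<and> sw i \<le> pw i \<and> pw i \<le> real p * sw i"
    using assms(2) by force
  have "\<exists>ser r C'. valid_schedule p n sw pw a ser r C'"
    by (rule valid_schedule_exists[OF assms(1)]) (use H in blast)
  then have "?awake \<noteq> {}" by blast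
  then have "measure lborel (unk_saturated p n sw a S C) / 3 \<le> Inf ?awake"
    by (rule cInf_greatest) (use unk_saturated_le_awake_time[OF assms(1) H assms(3)] in force)
  then show ?thesis
    unfolding opt_awake_def by simp
qed

end
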